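(* Let $[a,b]$ be an interval with $b-a=1$, let $\mu_0$ be a distribution and let $\mu_1$ be obtained from $\mu_0$ by the extreme move on $[a,b]$. Then $S[\mu_1]-S[\mu_0]\ge 3\,(M_2[\mu_1]-M_2[\mu_0])^2$.
   Context: A distribution is a finite set $\mu=\{(x_1,m_1),\dots,(x_k,m_k)\}$ with $x_i\in\mathbb R$ distinct and $m_i>0$; $\mu(A)=\sum_{x_i\in A}m_i$. Moments: $M_j[\mu]=\sum_i m_ix_i^j$. Spread: $S[\mu]=\sum_{i<j}|x_i-x_j|m_im_j$. The extreme move on $[a,b]$ applied to $\mu$ yields the unique distribution $\mu'$ with $\mu'\{a<x<b\}=0$, $\mu'(\{x\})=\mu(\{x\})$ for all $x\notin[a,b]$, $M_0[\mu']=M_0[\mu]$ and $M_1[\mu']=M_1[\mu]$ (i.e., all mass in $[a,b]$ is moved to the endpoints $a,b$ preserving total mass and center of mass). *)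

theory Defs
  imports Complex_Main
begin

text \<open>A distribution \<open>{(x_1,m_1),...,(x_k,m_k)}\<close> (distinct points, positive masses) is
represented by its mass function \<open>mu :: real \<Rightarrow> real\<close>: \<open>mu x\<close> is the mass at \<open>x\<close>
(0 if \<open>x\<close> is not an atom), with finite support and nonnegative values.\<close>

definition supp :: "(real \<Rightarrow> real) \<Rightarrow> real set" where
  "supp mu = {x. mu x \<noteq> 0}"

definition is_distribution :: "(real \<Rightarrow> real) \<Rightarrow> bool" where
  "is_distribution mu \<longleftrightarrow> finite (supp mu) \<and> (\<forall>x. mu x \<ge> 0)"

definition mass :: "(real \<Rightarrow> real) \<Rightarrow> real set \<Rightarrow> real" where
  "mass mu A = (\<Sum>x\<in>supp mu \<inter> A. mu x)"

definition moment :: "nat \<Rightarrow> (real \<Rightarrow> real) \<Rightarrow> real" where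
  "moment j mu = (\<Sum>x\<in>supp mu. mu x * x ^ j)"

definition spread :: "(real \<Rightarrow> real) \<Rightarrow> real" where
  "spread mu = (\<Sum>(x,y)\<in>{(x,y). x \<in> supp mu \<and> y \<in> supp mu \<and> x < y}. \<bar>x - y\<bar> * mu x * mu y)"

definition extreme_move :: "real \<Rightarrow> real \<Rightarrow> (real \<Rightarrow> real) \<Rightarrow> (real \<Rightarrow> real) \<Rightarrow> bool" where
  "extreme_move a b mu mu' \<longleftrightarrow>
     is_distribution mu' \<and>
     mass mu' {a<..<b} = 0 \<and>
     (\<forall>x. x \<notin> {a..b} \<longrightarrow> mass mu' {x} = mass mu {x}) \<and>
     moment 0 mu' = moment 0 mu \<and>
     moment 1 mu' = moment 1 mu"

end

theory Submission
  imports Defs "HOL-Analysis.Analysis"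
begin

(* Put n = mu0 restricted to [a,b].  The extreme move keeps mu0 outside [a,b],
   and on [a,b] replaces n by masses at a and b with the same total mass and centre of mass.
   Since every "test function" that is affine on [a,b] integrates identically against n and
   against the moved masses, the changes of M_2 and of the spread only involve n:
     M_2[mu1] - M_2[mu0] = sum_y n(y) (y-a)(b-y),
     (b-a) (S[mu1] - S[mu0]) = sum_{y,z} n(y) n(z) K(y,z),   K(y,z) = (min y z - a)(b - max y z),
   where K is the covariance of the Brownian bridge on [a,b].  For b - a = 1 the claim becomes
   3 (sum n(y) s_y (1-s_y))^2 <= sum n(y) n(z) K, with s_y = y - a in [0,1].  This is Cauchy-Schwarz
   in L^2[0,1]: K(s,t) = int (1[u<=s] - s)(1[u<=t] - t) du, s(1-s) = int (1[u<=s] - s)(1-2u) du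
   and int (1-2u)^2 du = 1/3.
   The file first proves this kernel inequality by explicit integration, then general facts about
   double sums, then the effect of an extreme move (in a context fixing the move), and finally
   combines them. *)

(* Integral over [0,1] of a quadratic polynomial cut off at c; every integrand below is a
   combination of such functions. *)
lemma truncated_quadratic_integral:
  fixes c p q r :: real
  assumes "0 \<le> c" "c \<le> 1"
  shows "((\<lambda>u. if u \<le> c then p + q*u + r*u^2 else 0)
           has_integral (p*c + q*c^2/2 + r*c^3/3)) {0..1}"
proof -
  have "((\<lambda>u. p + q*u + r*u^2) has_integral
          ((\<lambda>u. p*u + q*u^2/2 + r*u^3/3) c - (\<lambda>u. p*u + q*u^2/2 + r*u^3/3) 0)) {0..c}"
    by (rule fundamental_theorem_of_calculus[OF assms(1)])
       (auto intro!: derivative_eq_intros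
             simp: has_real_derivative_iff_has_vector_derivative[symmetric])
  then have "((\<lambda>u. p + q*u + r*u^2) has_integral (p*c + q*c^2/2 + r*c^3/3)) {0..c}"
    by simp
  then have "((\<lambda>u. if u \<le> c then p + q*u + r*u^2 else 0)
               has_integral (p*c + q*c^2/2 + r*c^3/3)) {0..c}"
    by (rule has_integral_eq[rotated]) auto
  moreover have "((\<lambda>u. if u \<le> c then p + q*u + r*u^2 else 0) has_integral 0) {c..1}"
    by (rule has_integral_spike_finite[of "{c}" _ _ "\<lambda>_. 0"]) auto
  ultimately show ?thesis
    using has_integral_combine[OF assms] by fastforce
qed

(* bridge s u = 1[u <= s] - s: integrating products of these functions in u reproduces the
   Brownian bridge covariance min s t * (1 - max s t). *)
definition bridge :: "real \<Rightarrow> real \<Rightarrow> real" where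
  "bridge s u = (if u \<le> s then 1 else 0) - s"

lemma step_integral:
  fixes c :: real
  assumes "0 \<le> c" "c \<le> 1"
  shows "((\<lambda>u. if u \<le> c then 1 else 0) has_integral c) {0..1}"
  using truncated_quadratic_integral[OF assms, of 1 0 0] by (simp cong: if_cong)

lemma bridge_product_integral:
  assumes "0 \<le> s" "s \<le> 1" "0 \<le> t" "t \<le> 1"
  shows "((\<lambda>u. bridge s u * bridge t u) has_integral (min s t * (1 - max s t))) {0..1}"
proof -
  let ?step = "\<lambda>c u. if u \<le> c then 1 else (0::real)"
  have "((\<lambda>u. ?step (min s t) u - t * ?step s u - s * ?step t u + s * t * ?step 1 u)
          has_integral (min s t - t * s - s * t + s * t * 1)) {0..1}"
    using assms
    by (intro has_integral_add has_integral_diff has_integral_mult_right step_integral) auto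
  then have "((\<lambda>u. ?step (min s t) u - t * ?step s u - s * ?step t u + s * t * ?step 1 u)
          has_integral (min s t * (1 - max s t))) {0..1}"
    by (rule has_integral_eq_rhs) (simp add: min_def max_def algebra_simps)
  moreover have "?step (min s t) u - t * ?step s u - s * ?step t u + s * t * ?step 1 u
                   = bridge s u * bridge t u" if "u \<in> {0..1}" for u
    using that by (cases "u \<le> s"; cases "u \<le> t") (simp_all add: bridge_def algebra_simps)
  ultimately show ?thesis
    by (rule has_integral_eq[rotated])
qed

(* The test direction used in the Cauchy-Schwarz step. *)
definition tilt :: "real \<Rightarrow> real" where
  "tilt u = 1 - 2 * u"

(* Pairing bridge s with tilt gives the weight s(1-s) of the second-moment change. *)
lemma bridge_tilt_integral:
  assumes "0 \<le> s" "s \<le> 1"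
  shows "((\<lambda>u. bridge s u * tilt u) has_integral (s * (1 - s))) {0..1}"
proof -
  have "((\<lambda>u. (if u \<le> s then 1 + (-2)*u + 0*u^2 else 0)
              - s * (if u \<le> 1 then 1 + (-2)*u + 0*u^2 else 0))
          has_integral ((1 * s + (-2) * s^2/2 + 0 * s^3/3) - s * (1*1 + (-2)*1^2/2 + 0*1^3/3))) {0..1}"
    using assms
    by (intro has_integral_diff has_integral_mult_right truncated_quadratic_integral) auto
  then have "((\<lambda>u. (if u \<le> s then 1 + (-2)*u + 0*u^2 else 0)
              - s * (if u \<le> 1 then 1 + (-2)*u + 0*u^2 else 0))
          has_integral (s * (1 - s))) {0..1}"
    by (rule has_integral_eq_rhs) (simp add: power2_eq_square algebra_simps)
  moreover have "(if u \<le> s then 1 + (-2)*u + 0*u^2 else 0)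
              - s * (if u \<le> 1 then 1 + (-2)*u + 0*u^2 else 0) = bridge s u * tilt u"
    if "u \<in> {0..1}" for u
    using that by (cases "u \<le> s") (simp_all add: bridge_def tilt_def algebra_simps)
  ultimately show ?thesis
    by (rule has_integral_eq[rotated])
qed

(* The squared norm of tilt, which produces the constant 3 of the theorem. *)
lemma tilt_square_integral: "((\<lambda>u. tilt u * tilt u) has_integral (1/3)) {0..1}"
proof -
  have "((\<lambda>u::real. if u \<le> 1 then 1 + (-4) * u + 4 * u^2 else 0)
          has_integral (1 * 1 + (-4) * 1^2/2 + 4 * 1^3/3)) {0..1}"
    by (rule truncated_quadratic_integral) auto
  then have "((\<lambda>u::real. if u \<le> 1 then 1 + (-4) * u + 4 * u^2 else 0) has_integral (1/3)) {0..1}"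
    by simp
  moreover have "(if u \<le> 1 then 1 + (-4) * u + 4 * u^2 else 0) = tilt u * tilt u"
    if "u \<in> {0..1}" for u :: real
    using that by (simp add: tilt_def power2_eq_square algebra_simps)
  ultimately show ?thesis
    by (rule has_integral_eq[rotated])
qed

(* Cauchy-Schwarz for the Brownian bridge kernel on [0,1], for arbitrary real weights w:
   with F = sum w_i bridge(s_i), the integral of (F - 3 B tilt)^2 equals A - 3 B^2 >= 0. *)
lemma bridge_kernel_inequality:
  fixes w s :: "'i \<Rightarrow> real" and I :: "'i set"
  assumes fin: "finite I" and range: "\<And>i. i \<in> I \<Longrightarrow> 0 \<le> s i \<and> s i \<le> 1"
  shows "3 * (\<Sum>i\<in>I. w i * (s i * (1 - s i)))^2
           \<le> (\<Sum>i\<in>I. \<Sum>j\<in>I. w i * w j * (min (s i) (s j) * (1 - max (s i) (s j))))"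
    (is "3 * ?B^2 \<le> ?A")
proof -
  define L where "L = 3 * ?B"
  have product: "((\<lambda>u. bridge (s i) u * bridge (s j) u) has_integral
                   (min (s i) (s j) * (1 - max (s i) (s j)))) {0..1}" if "i \<in> I" "j \<in> I" for i j
    using range[OF that(1)] range[OF that(2)] by (intro bridge_product_integral) auto
  have tilted: "((\<lambda>u. bridge (s i) u * tilt u) has_integral (s i * (1 - s i))) {0..1}"
    if "i \<in> I" for i
    using range[OF that] by (intro bridge_tilt_integral) auto
  have "((\<lambda>u. (\<Sum>i\<in>I. \<Sum>j\<in>I. w i * w j * (bridge (s i) u * bridge (s j) u))
             - 2 * L * (\<Sum>i\<in>I. w i * (bridge (s i) u * tilt u)) + L^2 * (tilt u * tilt u))
          has_integral (?A - 2 * L * ?B + L^2 * (1/3))) {0..1}"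
    by (intro has_integral_add has_integral_diff has_integral_mult_right has_integral_sum fin
          product tilted tilt_square_integral)
  moreover have "(\<Sum>i\<in>I. \<Sum>j\<in>I. w i * w j * (bridge (s i) u * bridge (s j) u))
             - 2 * L * (\<Sum>i\<in>I. w i * (bridge (s i) u * tilt u)) + L^2 * (tilt u * tilt u)
           = ((\<Sum>i\<in>I. w i * bridge (s i) u) - L * tilt u)^2" for u
  proof -
    have "(\<Sum>i\<in>I. \<Sum>j\<in>I. w i * w j * (bridge (s i) u * bridge (s j) u))
            = (\<Sum>i\<in>I. w i * bridge (s i) u) * (\<Sum>j\<in>I. w j * bridge (s j) u)"
      by (simp add: sum_product mult_ac)
    moreover have "(\<Sum>i\<in>I. w i * (bridge (s i) u * tilt u)) = tilt u * (\<Sum>i\<in>I. w i * bridge (s i) u)"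
      by (simp add: sum_distrib_left mult_ac)
    ultimately show ?thesis by (simp add: power2_eq_square algebra_simps)
  qed
  ultimately have "((\<lambda>u. ((\<Sum>i\<in>I. w i * bridge (s i) u) - L * tilt u)^2)
                      has_integral (?A - 2 * L * ?B + L^2 * (1/3))) {0..1}"
    by (rule has_integral_eq[rotated])
  then have "0 \<le> ?A - 2 * L * ?B + L^2 * (1/3)"
    by (rule has_integral_nonneg) simp
  then show ?thesis by (simp add: L_def power2_eq_square)
qed

lemma moment_over_superset:
  assumes "finite T" "supp mu \<subseteq> T"
  shows "moment j mu = (\<Sum>x\<in>T. mu x * x ^ j)"
  unfolding moment_def
  by (rule sum.mono_neutral_left[OF assms]) (auto simp: supp_def)

lemma spread_over_superset:
  assumes fin: "finite T" and sub: "supp mu \<subseteq> T"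
  shows "2 * spread mu = (\<Sum>x\<in>T. \<Sum>y\<in>T. \<bar>x - y\<bar> * mu x * mu y)"
proof -
  let ?g = "\<lambda>x y. if x < y then \<bar>x - y\<bar> * mu x * mu y else 0"
  have "spread mu = (\<Sum>(x,y)\<in>{(x,y). x \<in> T \<and> y \<in> T \<and> x < y}. \<bar>x - y\<bar> * mu x * mu y)"
    unfolding spread_def
    by (rule sum.mono_neutral_left)
       (use fin sub in \<open>auto simp: supp_def intro: finite_subset[OF _ finite_cartesian_product[OF fin fin]]\<close>)
  also have "\<dots> = (\<Sum>(x,y)\<in>T \<times> T. ?g x y)"
    by (rule sum.mono_neutral_cong_left) (use fin in \<open>auto split: if_splits\<close>)
  also have "\<dots> = (\<Sum>x\<in>T. \<Sum>y\<in>T. ?g x y)"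
    by (rule sum.cartesian_product[symmetric])
  finally have upper: "spread mu = (\<Sum>x\<in>T. \<Sum>y\<in>T. ?g x y)" .
  have lower: "(\<Sum>x\<in>T. \<Sum>y\<in>T. ?g y x) = spread mu"
    unfolding upper by (rule sum.swap)
  have "(\<Sum>x\<in>T. \<Sum>y\<in>T. \<bar>x - y\<bar> * mu x * mu y) = (\<Sum>x\<in>T. \<Sum>y\<in>T. ?g x y + ?g y x)"
    by (intro sum.cong refl) (auto simp: abs_minus_commute)
  also have "\<dots> = 2 * spread mu"
    by (simp add: sum.distrib upper lower)
  finally show ?thesis by simp
qed

lemma symmetric_double_sum_split:
  fixes g :: "'a \<Rightarrow> 'a \<Rightarrow> real"
  assumes "finite A" "finite B" "A \<inter> B = {}" and sym: "\<And>x y. g x y = g y x"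
  shows "(\<Sum>x\<in>A \<union> B. \<Sum>y\<in>A \<union> B. g x y)
           = (\<Sum>x\<in>A. \<Sum>y\<in>A. g x y) + 2 * (\<Sum>x\<in>A. \<Sum>y\<in>B. g x y) + (\<Sum>x\<in>B. \<Sum>y\<in>B. g x y)"
proof -
  have "(\<Sum>x\<in>B. \<Sum>y\<in>A. g x y) = (\<Sum>x\<in>A. \<Sum>y\<in>B. g x y)"
    by (subst sum.swap) (simp add: sym)
  then show ?thesis
    using assms by (simp add: sum.union_disjoint sum.distrib)
qed

lemma double_sum_symmetrized_product:
  fixes w f g :: "'a \<Rightarrow> real"
  shows "(\<Sum>y\<in>I. \<Sum>z\<in>I. w y * w z * (f y * g z + f z * g y))
           = 2 * (\<Sum>y\<in>I. w y * f y) * (\<Sum>z\<in>I. w z * g z)"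
proof -
  have product: "(\<Sum>y\<in>I. \<Sum>z\<in>I. w y * w z * (f y * g z)) = (\<Sum>y\<in>I. w y * f y) * (\<Sum>z\<in>I. w z * g z)"
    by (simp add: sum_product mult_ac)
  have "(\<Sum>y\<in>I. \<Sum>z\<in>I. w y * w z * (f z * g y)) = (\<Sum>y\<in>I. \<Sum>z\<in>I. w y * w z * (f y * g z))"
    by (subst sum.swap) (simp add: mult_ac)
  then show ?thesis
    by (simp add: distrib_left sum.distrib product)
qed

(* The Brownian bridge covariance on [a,b], up to the factor b - a. *)
definition bridge_cov :: "real \<Rightarrow> real \<Rightarrow> real \<Rightarrow> real \<Rightarrow> real" where
  "bridge_cov a b y z = (min y z - a) * (b - max y z)"

lemma bridge_cov_identity:
  "(b - a) * \<bar>y - z\<bar> + 2 * bridge_cov a b y z = (b - y) * (z - a) + (b - z) * (y - a)"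
  by (cases "y \<le> z") (simp_all add: bridge_cov_def min_def max_def algebra_simps)

lemma bridge_cov_endpoint:
  assumes "y = a \<or> y = b" "a \<le> z" "z \<le> b"
  shows "bridge_cov a b y z = 0"
  using assms by (auto simp: bridge_cov_def min_def max_def)

lemma inner_pair_identity:
  fixes nu :: "real \<Rightarrow> real"
  shows "(b - a) * (\<Sum>y\<in>I. \<Sum>z\<in>I. \<bar>y - z\<bar> * nu y * nu z)
           + 2 * (\<Sum>y\<in>I. \<Sum>z\<in>I. nu y * nu z * bridge_cov a b y z)
         = 2 * (\<Sum>y\<in>I. nu y * (b - y)) * (\<Sum>z\<in>I. nu z * (z - a))"
proof -
  have "(b - a) * (\<Sum>y\<in>I. \<Sum>z\<in>I. \<bar>y - z\<bar> * nu y * nu z)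
           + 2 * (\<Sum>y\<in>I. \<Sum>z\<in>I. nu y * nu z * bridge_cov a b y z)
        = (\<Sum>y\<in>I. \<Sum>z\<in>I. (b - a) * (\<bar>y - z\<bar> * nu y * nu z)
                                 + 2 * (nu y * nu z * bridge_cov a b y z))"
    by (simp add: sum_distrib_left sum.distrib)
  also have "\<dots> = (\<Sum>y\<in>I. \<Sum>z\<in>I. nu y * nu z * ((b - a) * \<bar>y - z\<bar> + 2 * bridge_cov a b y z))"
    by (intro sum.cong refl) (simp add: algebra_simps)
  also have "\<dots> = (\<Sum>y\<in>I. \<Sum>z\<in>I. nu y * nu z * ((b - y) * (z - a) + (b - z) * (y - a)))"
    by (simp only: bridge_cov_identity)
  also have "\<dots> = 2 * (\<Sum>y\<in>I. nu y * (b - y)) * (\<Sum>z\<in>I. nu z * (z - a))"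
    by (rule double_sum_symmetrized_product)
  finally show ?thesis .
qed

(* Atoms of mu in [a,b] together with both endpoints, and atoms outside [a,b].  Together they
   contain the supports of mu and of its extreme move. *)
definition inner_atoms :: "real \<Rightarrow> real \<Rightarrow> (real \<Rightarrow> real) \<Rightarrow> real set" where
  "inner_atoms a b mu = {a, b} \<union> (supp mu \<inter> {a..b})"

definition outer_atoms :: "real \<Rightarrow> real \<Rightarrow> (real \<Rightarrow> real) \<Rightarrow> real set" where
  "outer_atoms a b mu = supp mu - {a..b}"

context
  fixes a b :: real and mu mu' :: "real \<Rightarrow> real"
  assumes ab: "a < b" and distr: "is_distribution mu" and move: "extreme_move a b mu mu'"
begin

lemma move_outside: "x \<notin> {a..b} \<Longrightarrow> mu' x = mu x"
proof -
  assume "x \<notin> {a..b}"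
  then have "mass mu' {x} = mass mu {x}"
    using move by (simp add: extreme_move_def)
  moreover have "mass nu {x} = nu x" for nu
    by (cases "nu x = 0") (auto simp: mass_def supp_def)
  ultimately show ?thesis by simp
qed

lemma move_inside: "a < x \<Longrightarrow> x < b \<Longrightarrow> mu' x = 0"
proof -
  assume "a < x" "x < b"
  have "finite (supp mu')" "\<And>y. mu' y \<ge> 0" "mass mu' {a<..<b} = 0"
    using move by (auto simp: extreme_move_def is_distribution_def)
  then have "\<forall>y\<in>supp mu' \<inter> {a<..<b}. mu' y = 0"
    unfolding mass_def by (subst (asm) sum_nonneg_eq_0_iff) auto
  with \<open>a < x\<close> \<open>x < b\<close> show "mu' x = 0"
    by (auto simp: supp_def)
qed

lemma finite_inner_atoms: "finite (inner_atoms a b mu)"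
  and finite_outer_atoms: "finite (outer_atoms a b mu)"
  using distr by (auto simp: inner_atoms_def outer_atoms_def is_distribution_def)

lemma atoms_disjoint: "outer_atoms a b mu \<inter> inner_atoms a b mu = {}"
  using ab by (auto simp: inner_atoms_def outer_atoms_def)

lemma supp_before_move: "supp mu \<subseteq> outer_atoms a b mu \<union> inner_atoms a b mu"
  by (auto simp: inner_atoms_def outer_atoms_def)

lemma supp_after_move: "supp mu' \<subseteq> outer_atoms a b mu \<union> inner_atoms a b mu"
proof
  fix x assume x: "x \<in> supp mu'"
  show "x \<in> outer_atoms a b mu \<union> inner_atoms a b mu"
  proof (cases "x \<in> {a..b}")
    case True
    with x move_inside have "x = a \<or> x = b"
      by (force simp: supp_def)
    then show ?thesis by (auto simp: inner_atoms_def)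
  next
    case False
    with x move_outside show ?thesis
      by (auto simp: supp_def outer_atoms_def)
  qed
qed

lemma sum_over_atoms:
  "(\<Sum>x\<in>outer_atoms a b mu \<union> inner_atoms a b mu. f x)
     = (\<Sum>x\<in>outer_atoms a b mu. f x) + (\<Sum>x\<in>inner_atoms a b mu. f x)"
  by (rule sum.union_disjoint[OF finite_outer_atoms finite_inner_atoms atoms_disjoint])

lemma outer_sum_unchanged:
  "(\<Sum>x\<in>outer_atoms a b mu. mu' x * f x) = (\<Sum>x\<in>outer_atoms a b mu. mu x * f x)"
  by (intro sum.cong refl) (simp add: move_outside outer_atoms_def)

lemma moment_over_atoms:
  assumes "supp nu \<subseteq> outer_atoms a b mu \<union> inner_atoms a b mu"
  shows "moment j nu = (\<Sum>x\<in>outer_atoms a b mu. nu x * x ^ j) + (\<Sum>x\<in>inner_atoms a b mu. nu x * x ^ j)"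
  using moment_over_superset[OF _ assms] finite_outer_atoms finite_inner_atoms
  by (simp add: sum_over_atoms)

lemma inner_moment_preserved:
  assumes "j \<le> 1"
  shows "(\<Sum>y\<in>inner_atoms a b mu. mu' y * y ^ j) = (\<Sum>y\<in>inner_atoms a b mu. mu y * y ^ j)"
proof -
  have "j = 0 \<or> j = 1" using assms by auto
  then have "moment j mu' = moment j mu"
    using move by (auto simp: extreme_move_def)
  then show ?thesis
    using moment_over_atoms[OF supp_after_move] moment_over_atoms[OF supp_before_move]
      outer_sum_unchanged by simp
qed

lemma inner_affine_preserved:
  "(\<Sum>y\<in>inner_atoms a b mu. mu' y * (p + q * y)) = (\<Sum>y\<in>inner_atoms a b mu. mu y * (p + q * y))"
proof -
  have "(\<Sum>y\<in>inner_atoms a b mu. nu y * (p + q * y))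
          = p * (\<Sum>y\<in>inner_atoms a b mu. nu y * y ^ 0) + q * (\<Sum>y\<in>inner_atoms a b mu. nu y * y ^ 1)"
    for nu :: "real \<Rightarrow> real"
    by (simp add: algebra_simps sum.distrib sum_distrib_left)
  then show ?thesis
    using inner_moment_preserved[of 0] inner_moment_preserved[of 1] by simp
qed

lemma moved_mass_at_endpoints:
  assumes "y \<in> inner_atoms a b mu" "mu' y \<noteq> 0"
  shows "y = a \<or> y = b"
  using assms move_inside by (force simp: inner_atoms_def)

(* For x outside [a,b], y |-> |x - y| is affine on [a,b], so the potential of the inner mass
   at x is unchanged; thus interactions between outer and inner atoms do not change. *)
lemma cross_potential_preserved:
  assumes "x \<notin> {a..b}"
  shows "(\<Sum>y\<in>inner_atoms a b mu. mu' y * \<bar>x - y\<bar>) = (\<Sum>y\<in>inner_atoms a b mu. mu y * \<bar>x - y\<bar>)"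
proof -
  obtain p q where affine: "\<And>y. y \<in> {a..b} \<Longrightarrow> \<bar>x - y\<bar> = p + q * y"
  proof (cases "x < a")
    case True
    then show ?thesis by (intro that[of "- x" 1]) auto
  next
    case False
    with assms have "b < x" by auto
    then show ?thesis by (intro that[of x "- 1"]) auto
  qed
  have inner: "inner_atoms a b mu \<subseteq> {a..b}"
    using ab by (auto simp: inner_atoms_def)
  have "(\<Sum>y\<in>inner_atoms a b mu. nu y * \<bar>x - y\<bar>) = (\<Sum>y\<in>inner_atoms a b mu. nu y * (p + q * y))"
    for nu :: "real \<Rightarrow> real"
    using inner affine by (intro sum.cong refl) auto
  then show ?thesis
    using inner_affine_preserved by simp
qed

(* The change of the second moment: y^2 differs from an affine function by -(y-a)(b-y), which
   vanishes at the endpoints where mu' lives. *)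
lemma second_moment_change:
  "moment 2 mu' - moment 2 mu = (\<Sum>y\<in>inner_atoms a b mu. mu y * ((y - a) * (b - y)))"
proof -
  let ?I = "inner_atoms a b mu"
  have square: "y ^ 2 = (- a * b + (a + b) * y) - (y - a) * (b - y)" for y :: real
    by (simp add: power2_eq_square algebra_simps)
  have "(\<Sum>y\<in>?I. mu' y * y ^ 2) = (\<Sum>y\<in>?I. mu' y * (- a * b + (a + b) * y))"
  proof (intro sum.cong refl)
    fix y assume "y \<in> ?I"
    then have "mu' y * ((y - a) * (b - y)) = 0"
      using moved_mass_at_endpoints by (cases "mu' y = 0") auto
    moreover have "mu' y * y ^ 2 = mu' y * (- a * b + (a + b) * y) - mu' y * ((y - a) * (b - y))"
      by (subst square) (rule right_diff_distrib)
    ultimately show "mu' y * y ^ 2 = mu' y * (- a * b + (a + b) * y)"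
      by simp
  qed
  also have "\<dots> = (\<Sum>y\<in>?I. mu y * (- a * b + (a + b) * y))"
    by (rule inner_affine_preserved)
  also have "\<dots> = (\<Sum>y\<in>?I. mu y * y ^ 2 + mu y * ((y - a) * (b - y)))"
    by (intro sum.cong refl) (simp add: power2_eq_square algebra_simps)
  also have "\<dots> = (\<Sum>y\<in>?I. mu y * y ^ 2) + (\<Sum>y\<in>?I. mu y * ((y - a) * (b - y)))"
    by (rule sum.distrib)
  finally show ?thesis
    using moment_over_atoms[OF supp_after_move] moment_over_atoms[OF supp_before_move]
      outer_sum_unchanged by simp
qed

(* The change of the spread is the bridge quadratic form of the inner masses: outer-outer and
   outer-inner interactions are unchanged, and the inner-inner interaction is computed with
   inner_pair_identity, whose bridge part vanishes for mu'. *)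
lemma spread_change:
  "(b - a) * (spread mu' - spread mu)
     = (\<Sum>y\<in>inner_atoms a b mu. \<Sum>z\<in>inner_atoms a b mu. mu y * mu z * bridge_cov a b y z)"
proof -
  let ?O = "outer_atoms a b mu" and ?I = "inner_atoms a b mu"
  define pairs where "pairs nu A B = (\<Sum>x\<in>A. \<Sum>y\<in>B. \<bar>x - y\<bar> * nu x * nu y)"
    for nu :: "real \<Rightarrow> real" and A B
  have split: "2 * spread nu = pairs nu ?O ?O + 2 * pairs nu ?O ?I + pairs nu ?I ?I"
    if "supp nu \<subseteq> ?O \<union> ?I" for nu
  proof -
    have "2 * spread nu = (\<Sum>x\<in>?O \<union> ?I. \<Sum>y\<in>?O \<union> ?I. \<bar>x - y\<bar> * nu x * nu y)"
      using finite_outer_atoms finite_inner_atoms by (intro spread_over_superset that) auto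
    also have "\<dots> = pairs nu ?O ?O + 2 * pairs nu ?O ?I + pairs nu ?I ?I"
      unfolding pairs_def
      by (rule symmetric_double_sum_split[OF finite_outer_atoms finite_inner_atoms atoms_disjoint])
         (simp add: abs_minus_commute mult_ac)
    finally show ?thesis .
  qed
  have outer: "pairs mu' ?O ?O = pairs mu ?O ?O"
    unfolding pairs_def by (intro sum.cong refl) (simp add: move_outside outer_atoms_def)
  have cross: "pairs mu' ?O ?I = pairs mu ?O ?I"
    unfolding pairs_def
  proof (rule sum.cong[OF refl])
    fix x assume "x \<in> ?O"
    then have x: "x \<notin> {a..b}" by (simp add: outer_atoms_def)
    have factor: "(\<Sum>y\<in>?I. \<bar>x - y\<bar> * nu x * nu y) = nu x * (\<Sum>y\<in>?I. nu y * \<bar>x - y\<bar>)"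
      for nu :: "real \<Rightarrow> real"
      by (simp add: sum_distrib_left mult_ac)
    show "(\<Sum>y\<in>?I. \<bar>x - y\<bar> * mu' x * mu' y) = (\<Sum>y\<in>?I. \<bar>x - y\<bar> * mu x * mu y)"
      unfolding factor using cross_potential_preserved[OF x] move_outside[OF x] by simp
  qed
  have endpoint_free: "(\<Sum>y\<in>?I. \<Sum>z\<in>?I. mu' y * mu' z * bridge_cov a b y z) = 0"
  proof (intro sum.neutral ballI)
    fix y z assume "y \<in> ?I" "z \<in> ?I"
    moreover have "a \<le> z" "z \<le> b" using \<open>z \<in> ?I\<close> ab by (auto simp: inner_atoms_def)
    ultimately show "mu' y * mu' z * bridge_cov a b y z = 0"
      using moved_mass_at_endpoints bridge_cov_endpoint by (cases "mu' y = 0") auto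
  qed
  have left_weight: "(\<Sum>y\<in>?I. mu' y * (b - y)) = (\<Sum>y\<in>?I. mu y * (b - y))"
    using inner_affine_preserved[of b "- 1"] by simp
  have right_weight: "(\<Sum>z\<in>?I. mu' z * (z - a)) = (\<Sum>z\<in>?I. mu z * (z - a))"
    using inner_affine_preserved[of "- a" 1] by simp
  have inner: "(b - a) * pairs mu' ?I ?I
      = (b - a) * pairs mu ?I ?I + 2 * (\<Sum>y\<in>?I. \<Sum>z\<in>?I. mu y * mu z * bridge_cov a b y z)"
    using inner_pair_identity[where nu = mu' and I = ?I and a = a and b = b]
      inner_pair_identity[where nu = mu and I = ?I and a = a and b = b]
    unfolding pairs_def endpoint_free left_weight right_weight by simp
  have "2 * ((b - a) * (spread mu' - spread mu))
          = (b - a) * (2 * spread mu') - (b - a) * (2 * spread mu)"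
    by (simp add: algebra_simps)
  also have "\<dots> = (b - a) * pairs mu' ?I ?I - (b - a) * pairs mu ?I ?I"
    unfolding split[OF supp_after_move] split[OF supp_before_move] outer cross
    by (simp add: algebra_simps)
  finally show ?thesis
    using inner by simp
qed

end

(* For b - a = 1, substituting s = y - a turns the bridge form on [a,b] into the kernel on
   [0,1], and the kernel inequality gives the claim. *)
theorem mainTheorem6:
  fixes a b :: real and mu0 mu1 :: "real \<Rightarrow> real"
  assumes "b - a = 1"
    and "is_distribution mu0"
    and "extreme_move a b mu0 mu1"
  shows "spread mu1 - spread mu0 \<ge> 3 * (moment 2 mu1 - moment 2 mu0) ^ 2"
proof -
  have ab: "a < b" and b: "b = a + 1" using assms(1) by auto
  note move = ab assms(2,3)
  let ?I = "inner_atoms a b mu0"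
  have range: "\<And>y. y \<in> ?I \<Longrightarrow> 0 \<le> y - a \<and> y - a \<le> 1"
    using b by (auto simp: inner_atoms_def)
  have "moment 2 mu1 - moment 2 mu0 = (\<Sum>y\<in>?I. mu0 y * ((y - a) * (1 - (y - a))))"
    unfolding second_moment_change[OF move] by (intro sum.cong refl) (simp add: b algebra_simps)
  then have "3 * (moment 2 mu1 - moment 2 mu0) ^ 2
      \<le> (\<Sum>y\<in>?I. \<Sum>z\<in>?I. mu0 y * mu0 z * (min (y - a) (z - a) * (1 - max (y - a) (z - a))))"
    using bridge_kernel_inequality[OF finite_inner_atoms[OF move] range] by simp
  also have "\<dots> = (\<Sum>y\<in>?I. \<Sum>z\<in>?I. mu0 y * mu0 z * bridge_cov a b y z)"
    by (intro sum.cong refl) (simp add: bridge_cov_def b min_diff_distrib_left max_def)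
  also have "\<dots> = spread mu1 - spread mu0"
    using spread_change[OF move] assms(1) by simp
  finally show ?thesis .
qed

end
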